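(* Let $p(\cdot)\in\mathcal{P}^{\log}(\mathbb{R}^n)$ with $0<p_-\le p_+<\infty$ and $p_\infty=p_+$, and let $s>1/p_-$. If $\omega$ is a weight with $\omega^{1/s}\in RH_{sp_+}$, then for every cube $Q$, \[ \|\chi_Q\|_{L^{p(\cdot)}_\omega}\approx\begin{cases}\left[\int_Q\omega(x)^{p_+}dx\right]^{1/p_+}, & \text{if } \ell(Q)>1,\\[1ex] \left[\int_Q\omega(x)^{p_+(Q)}dx\right]^{1/p_+(Q)}, & \text{if } \ell(Q)\le1,\end{cases} \] with implicit constants independent of $Q$.
   Context: $\ell(Q)$ is the side length of $Q$; $p_+(Q)=\operatorname{ess\,sup}_{x\in Q}p(x)$, $p_+=p_+(\mathbb{R}^n)$, $p_-=\operatorname{ess\,inf}p$. $p(\cdot)\in\mathcal{P}^{\log}(\mathbb{R}^n)$ means $0<p_-\le p_+<\infty$ and there are $C,C_\infty>0$ and $p_-\le p_\infty\le p_+$ with $|p(x)-p(y)|\le C/(-\log|x-y|)$ for $|x-y|\le1/2$ and $|p(x)-p_\infty|\le C_\infty/\log(e+|x|)$. A weight is a locally integrable $\omega$ with $0<\omega<\infty$ a.e.; $\|f\|_{L^{p(\cdot)}_\omega}:=\|f\omega\|_{L^{p(\cdot)}}$ with $\|g\|_{L^{p(\cdot)}}=\inf\{\lambda>0:\int|g/\lambda|^{p(x)}dx\le1\}$. $\omega\in RH_t$ ($t>1$) means there is $C>0$ with $\left(\frac1{|Q|}\int_Q\omega^t\right)^{1/t}\le C\frac1{|Q|}\int_Q\omega$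 for every cube $Q$. *)

theory Defs
  imports "HOL-Analysis.Analysis"
begin

definition ess_sup_on :: "('a::euclidean_space) set \<Rightarrow> ('a \<Rightarrow> real) \<Rightarrow> real" where
  "ess_sup_on Q p = Inf {M. AE x in lebesgue. x \<in> Q \<longrightarrow> p x \<le> M}"

definition ess_inf_on :: "('a::euclidean_space) set \<Rightarrow> ('a \<Rightarrow> real) \<Rightarrow> real" where
  "ess_inf_on Q p = Sup {M. AE x in lebesgue. x \<in> Q \<longrightarrow> M \<le> p x}"

definition cube :: "'a::euclidean_space \<Rightarrow> real \<Rightarrow> 'a set" where
  "cube a l = cbox a (a + l *\<^sub>R One)"

definition P_log :: "('a::euclidean_space \<Rightarrow> real) \<Rightarrow> real \<Rightarrow> bool" where
  "P_log p p_inf \<longleftrightarrow>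
     p \<in> borel_measurable lebesgue \<and>
     (\<exists>M. AE x in lebesgue. p x \<le> M) \<and>
     0 < ess_inf_on UNIV p \<and>
     ess_inf_on UNIV p \<le> p_inf \<and> p_inf \<le> ess_sup_on UNIV p \<and>
     (\<exists>C>0. \<forall>x y. 0 < dist x y \<and> dist x y \<le> 1/2 \<longrightarrow>
                   \<bar>p x - p y\<bar> \<le> C / (- ln (dist x y))) \<and>
     (\<exists>Cinf>0. \<forall>x. \<bar>p x - p_inf\<bar> \<le> Cinf / ln (exp 1 + norm x))"

definition var_norm :: "('a::euclidean_space \<Rightarrow> real) \<Rightarrow> ('a \<Rightarrow> real) \<Rightarrow> real" where
  "var_norm p g = Inf {lam. 0 < lam \<and>
      (\<integral>\<^sup>+ x. ennreal ((\<bar>g x\<bar> / lam) powr p x) \<partial>lebesgue) \<le> 1}"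

definition weighted_var_norm ::
  "('a::euclidean_space \<Rightarrow> real) \<Rightarrow> ('a \<Rightarrow> real) \<Rightarrow> ('a \<Rightarrow> real) \<Rightarrow> real" where
  "weighted_var_norm p \<omega> f = var_norm p (\<lambda>x. f x * \<omega> x)"

definition weight :: "('a::euclidean_space \<Rightarrow> real) \<Rightarrow> bool" where
  "weight \<omega> \<longleftrightarrow> (\<forall>K. compact K \<longrightarrow> set_integrable lebesgue K \<omega>) \<and>
                 (AE x in lebesgue. 0 < \<omega> x)"

definition RH :: "real \<Rightarrow> ('a::euclidean_space \<Rightarrow> real) \<Rightarrow> bool" where
  "RH t w \<longleftrightarrow> (\<exists>C>0. \<forall>a l. 0 < l \<longrightarrow>
      set_integrable lebesgue (cube a l) (\<lambda>x. w x powr t) \<and>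
      ((1 / measure lebesgue (cube a l)) * (\<integral>x\<in>cube a l. w x powr t \<partial>lebesgue)) powr (1/t)
        \<le> C * ((1 / measure lebesgue (cube a l)) * (\<integral>x\<in>cube a l. w x \<partial>lebesgue)))"

end

theory Submission
  imports Defs "HOL-Probability.Sinc_Integral"
begin

(*
  Write q = p_+ for cubes of side l > 1 and q = p_+(Q) for l <= 1, and R(Q) for the norm of the
  weight in L^q(Q). The log-Hoelder condition holds at every point, so p is continuous: its
  essential bounds are pointwise bounds and p_+(Q) is attained in Q.

  Upper bound: for x in Q and u >= 0 one has u^p(x) <= K u^q + h(x) with h integrable uniformly
  in Q -- for small cubes h = chi_Q, for large cubes h decays polynomially, because p(x) tends to
  p_+ = p_infinity at a logarithmic rate. Hence the modular of chi_Q w / R(Q) is bounded.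

  Lower bound: let the modular of chi_Q w / lambda be at most 1. On Q the quantity
  |Q|^((p(x) - q) / q) is bounded (trivially for large cubes, by the log-Hoelder condition for
  small ones), so Young's inequality with exponent s p(x) gives
  integral_Q w^(1/s) <= C lambda^(1/s) |Q|^(1 - 1/(s q)). The reverse Hoelder inequality for
  w^(1/s) converts this into a bound for the mean of w^(p_+), and Hoelder's inequality into one
  for the mean of w^q, which is R(Q) <= C lambda.
*)

lemma powr_le_Young:
  fixes u r p A :: real
  assumes "0 \<le> u" "0 < r" "r < p" "0 < A"
  shows "u powr r \<le> A * u powr p + A powr (- r / (p - r))"
proof (cases "A * u powr (p - r) \<ge> 1")
  case True
  have "u powr r \<le> A * u powr (p - r) * u powr r"
    using mult_right_mono[OF True powr_ge_zero[of u r]] by simp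
  also have "\<dots> = A * u powr p" using assms by (cases "u = 0") (simp_all add: powr_add[symmetric])
  finally show ?thesis by (smt (verit) powr_ge_zero)
next
  case False
  then have "u powr (p - r) < 1 / A" using assms by (simp add: field_simps mult.commute)
  then have "(u powr (p - r)) powr (r / (p - r)) < (1 / A) powr (r / (p - r))"
    using assms by (intro powr_less_mono2) auto
  also have "(u powr (p - r)) powr (r / (p - r)) = u powr r" using assms by (simp add: powr_powr)
  also have "(1 / A) powr (r / (p - r)) = A powr (- r / (p - r))" using assms
    by (simp add: powr_divide powr_minus_divide)
  finally show ?thesis using assms by (smt (verit) powr_ge_zero mult_nonneg_nonneg)
qed

lemma powr_le_powr_plus_1:
  fixes u p q :: real
  assumes "0 \<le> u" "0 < p" "p \<le> q"
  shows "u powr p \<le> u powr q + 1"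
proof (cases "u \<le> 1")
  case True
  then have "u powr p \<le> 1" using powr_mono2[of p u 1] assms by simp
  then show ?thesis by (smt (verit) powr_ge_zero)
next
  case False
  then show ?thesis using assms by (smt (verit) powr_mono)
qed

text \<open>
  Young's inequality with weight \<open>A = V powr ((p - r) / q)\<close>, chosen so that the error term
  \<open>A powr (- r / (p - r)) = V powr (- r / q)\<close> does not depend on \<open>p\<close>.
\<close>
lemma powr_le_Young_volume:
  fixes u r p q V B :: real
  assumes u: "0 \<le> u" and r: "0 < r" "r < p" and q: "0 < q" and V: "0 < V"
    and B: "V powr ((p - q) / q) \<le> B"
  shows "u powr r \<le> V powr (1 - r / q) * B * u powr p + V powr (- r / q)"
proof -
  define A where "A = V powr ((p - r) / q)"
  have "(p - r) / q * (- r / (p - r)) = - r / q" using r q by (simp add: field_simps)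
  then have "A powr (- r / (p - r)) = V powr (- r / q)" unfolding A_def powr_powr by simp
  moreover have "A \<le> V powr (1 - r / q) * B"
  proof -
    have "(p - r) / q = (1 - r / q) + (p - q) / q" using q by (simp add: field_simps)
    then have "A = V powr (1 - r / q) * V powr ((p - q) / q)" by (simp add: A_def powr_add)
    also have "\<dots> \<le> V powr (1 - r / q) * B" using B by (intro mult_left_mono) auto
    finally show ?thesis .
  qed
  moreover have "0 < A" unfolding A_def using V by simp
  ultimately show ?thesis
    using powr_le_Young[OF u r, of A] by (smt (verit) mult_right_mono powr_ge_zero)
qed

lemma inner_One_Basis [simp]: "b \<in> Basis \<Longrightarrow> (One :: 'a::euclidean_space) \<bullet> b = 1"
  by (simp add: inner_sum_left inner_Basis)

lemma mem_cube: "x \<in> cube a l \<longleftrightarrow> (\<forall>b\<in>Basis. a \<bullet> b \<le> x \<bullet> b \<and> x \<bullet> b \<le> a \<bullet> b + l)"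
  unfolding cube_def by (auto simp: mem_box inner_add_left)

lemma corner_mem_cube: "0 \<le> l \<Longrightarrow> a \<in> cube a l"
  unfolding mem_cube by auto

lemma compact_cube: "compact (cube a l)"
  unfolding cube_def by simp

lemma sets_cube [measurable]: "cube a l \<in> sets lebesgue"
  unfolding cube_def by simp

lemma emeasure_cube:
  "0 \<le> l \<Longrightarrow> emeasure lebesgue (cube (a::'a::euclidean_space) l) = ennreal (l ^ DIM('a))"
  unfolding cube_def
  by (simp add: emeasure_completion emeasure_lborel_cbox_eq inner_add_left inner_diff_left)

lemma measure_cube:
  "0 \<le> l \<Longrightarrow> measure lebesgue (cube (a::'a::euclidean_space) l) = l ^ DIM('a)"
  using emeasure_cube[of l a] by (simp add: measure_def)

lemma set_integrable_const_cube: "set_integrable lebesgue (cube a l) (\<lambda>_. c :: real)"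
proof (cases "0 \<le> l")
  case True
  then show ?thesis
    using emeasure_cube[OF True, of a] unfolding set_integrable_def
    by (intro integrable_scaleR_left integrable_real_indicator) auto
next
  case False
  then have "cube a l = {}" using less_le_trans unfolding mem_cube
    by (auto simp: cube_def box_eq_empty inner_add_left)
  then show ?thesis by (simp add: set_integrable_def)
qed

lemma not_AE_notin_cube:
  assumes "0 < l" shows "\<not> (AE x in lebesgue. x \<notin> cube a l)"
proof
  assume "AE x in lebesgue. x \<notin> cube a l"
  then have "cube a l \<in> null_sets lebesgue" by (subst AE_iff_null_sets) auto
  then show False using emeasure_cube[of l a] assms by auto
qed

lemma dist_le_of_inner_Basis_le:
  fixes x y :: "'a::euclidean_space"
  assumes "\<And>i. i \<in> Basis \<Longrightarrow> \<bar>(x - y) \<bullet> i\<bar> \<le> t"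
  shows "dist x y \<le> real DIM('a) * t"
proof -
  have "dist x y \<le> (\<Sum>i\<in>Basis. \<bar>(x - y) \<bullet> i\<bar>)"
    unfolding dist_norm by (rule norm_le_l1)
  also have "\<dots> \<le> (\<Sum>i\<in>(Basis::'a set). t)" using assms by (rule sum_mono)
  finally show ?thesis by simp
qed

lemma dist_le_in_cube:
  assumes "x \<in> cube (a::'a::euclidean_space) l" "y \<in> cube a l"
  shows "dist x y \<le> real DIM('a) * l"
proof (rule dist_le_of_inner_Basis_le)
  fix i :: 'a assume "i \<in> Basis"
  then have "a \<bullet> i \<le> x \<bullet> i" "x \<bullet> i \<le> a \<bullet> i + l" "a \<bullet> i \<le> y \<bullet> i" "y \<bullet> i \<le> a \<bullet> i + l"
    using assms unfolding mem_cube by auto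
  then show "\<bar>(x - y) \<bullet> i\<bar> \<le> l" by (simp add: inner_diff_left abs_le_iff)
qed

lemma cube_subset_cube_inter_ball:
  fixes x a :: "'a::euclidean_space"
  assumes l: "0 < l" and x: "x \<in> cube a l" and d: "0 < d"
  obtains c \<delta> where "0 < \<delta>" "cube c \<delta> \<subseteq> cube a l \<inter> ball x d"
proof -
  define n where "n = real DIM('a)"
  have n: "n \<ge> 1" unfolding n_def by (simp add: DIM_positive Suc_leI)
  define \<delta> where "\<delta> = min (l / 2) (d / (2 * n))"
  have \<delta>: "0 < \<delta>" "\<delta> \<le> l / 2" "n * \<delta> < d"
    using l d n unfolding \<delta>_def by (auto simp: min_def field_simps)
  \<comment> \<open>in each coordinate, the small cube extends from x into the larger half of the edge\<close>
  define c where "c = (\<Sum>i\<in>Basis. (if x \<bullet> i \<le> a \<bullet> i + l / 2 then x \<bullet> i else x \<bullet> i - \<delta>) *\<^sub>R i)"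
  have ci: "c \<bullet> i = (if x \<bullet> i \<le> a \<bullet> i + l / 2 then x \<bullet> i else x \<bullet> i - \<delta>)" if "i \<in> Basis" for i
    unfolding c_def using that by simp
  have "y \<in> cube a l \<inter> ball x d" if y: "y \<in> cube c \<delta>" for y
  proof -
    have yi: "c \<bullet> i \<le> y \<bullet> i \<and> y \<bullet> i \<le> c \<bullet> i + \<delta>"
      and xi: "a \<bullet> i \<le> x \<bullet> i \<and> x \<bullet> i \<le> a \<bullet> i + l" if "i \<in> Basis" for i
      using y x that unfolding mem_cube by auto
    have "y \<in> cube a l"
      unfolding mem_cube using yi xi ci \<delta> by (force split: if_splits)
    moreover have "dist x y \<le> n * \<delta>"
      unfolding n_def
    proof (rule dist_le_of_inner_Basis_le)
      fix i :: 'a assume i: "i \<in> Basis"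
      show "\<bar>(x - y) \<bullet> i\<bar> \<le> \<delta>"
        using yi[OF i] ci[OF i] \<delta> by (auto simp: inner_diff_left split: if_splits)
    qed
    ultimately show ?thesis using \<delta> by simp
  qed
  then show ?thesis using that \<delta> by blast
qed

section \<open>Essential bounds of continuous functions\<close>

lemma continuous_le_of_AE_le_on_cube:
  fixes f :: "'a::euclidean_space \<Rightarrow> real"
  assumes cont: "continuous_on UNIV f" and l: "0 < l" and x: "x \<in> cube a l"
    and AE: "AE y in lebesgue. y \<in> cube a l \<longrightarrow> f y \<le> M"
  shows "f x \<le> M"
proof (rule ccontr)
  assume "\<not> f x \<le> M"
  moreover have "isCont f x" using cont by (simp add: continuous_on_eq_continuous_at)
  ultimately obtain d where d: "d > 0" "\<And>y. dist y x < d \<Longrightarrow> dist (f y) (f x) < f x - M"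
    unfolding continuous_at_eps_delta by (metis diff_gt_0_iff_gt not_le)
  obtain c \<delta> where c: "0 < \<delta>" "cube c \<delta> \<subseteq> cube a l \<inter> ball x d"
    using cube_subset_cube_inter_ball[OF l x d(1)] by blast
  have "AE y in lebesgue. y \<notin> cube c \<delta>"
    using AE
  proof eventually_elim
    case (elim y)
    show ?case
    proof
      assume "y \<in> cube c \<delta>"
      then have "f y \<le> M" "dist (f y) (f x) < f x - M"
        using c elim d(2)[of y] by (auto simp: dist_commute)
      then show False by (simp add: dist_real_def)
    qed
  qed
  then show False using not_AE_notin_cube[OF c(1)] by blast
qed

lemma le_ess_sup_on:
  fixes f :: "'a::euclidean_space \<Rightarrow> real"
  assumes cont: "continuous_on UNIV f" and bdd: "\<exists>M. AE y in lebesgue. y \<in> S \<longrightarrow> f y \<le> M"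
    and l: "0 < l" and sub: "cube a l \<subseteq> S" and x: "x \<in> cube a l"
  shows "f x \<le> ess_sup_on S f"
  unfolding ess_sup_on_def
proof (rule cInf_greatest)
  show "{M. AE y in lebesgue. y \<in> S \<longrightarrow> f y \<le> M} \<noteq> {}" using bdd by auto
  fix M assume "M \<in> {M. AE y in lebesgue. y \<in> S \<longrightarrow> f y \<le> M}"
  then have "AE y in lebesgue. y \<in> S \<longrightarrow> f y \<le> M" by simp
  then have "AE y in lebesgue. y \<in> cube a l \<longrightarrow> f y \<le> M"
    by (rule eventually_mono) (use sub in auto)
  then show "f x \<le> M" by (rule continuous_le_of_AE_le_on_cube[OF cont l x])
qed

lemma ess_inf_on_le:
  fixes f :: "'a::euclidean_space \<Rightarrow> real"
  assumes cont: "continuous_on UNIV f" and bdd: "\<exists>M. AE y in lebesgue. y \<in> S \<longrightarrow> M \<le> f y"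
    and l: "0 < l" and sub: "cube a l \<subseteq> S" and x: "x \<in> cube a l"
  shows "ess_inf_on S f \<le> f x"
  unfolding ess_inf_on_def
proof (rule cSup_least)
  show "{M. AE y in lebesgue. y \<in> S \<longrightarrow> M \<le> f y} \<noteq> {}" using bdd by auto
  fix M assume "M \<in> {M. AE y in lebesgue. y \<in> S \<longrightarrow> M \<le> f y}"
  then have "AE y in lebesgue. y \<in> S \<longrightarrow> M \<le> f y" by simp
  then have "AE y in lebesgue. y \<in> cube a l \<longrightarrow> - f y \<le> - M"
    by (rule eventually_mono) (use sub in auto)
  moreover have "continuous_on UNIV (\<lambda>y. - f y)" using cont by (intro continuous_intros)
  ultimately have "- f x \<le> - M" using continuous_le_of_AE_le_on_cube[OF _ l x] by blast
  then show "M \<le> f x" by simp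
qed

lemma ess_sup_on_cube_attained:
  fixes f :: "'a::euclidean_space \<Rightarrow> real"
  assumes cont: "continuous_on UNIV f" and l: "0 < l"
  shows "\<exists>y\<in>cube a l. (\<forall>x\<in>cube a l. f x \<le> f y) \<and> ess_sup_on (cube a l) f = f y"
proof -
  have "\<exists>y\<in>cube a l. \<forall>x\<in>cube a l. f x \<le> f y"
    using corner_mem_cube[of l a] l continuous_on_subset[OF cont subset_UNIV]
    by (intro continuous_attains_sup[OF compact_cube]) auto
  then obtain y where y: "y \<in> cube a l" and max: "\<And>x. x \<in> cube a l \<Longrightarrow> f x \<le> f y"
    by blast
  have "ess_sup_on (cube a l) f \<le> f y"
    unfolding ess_sup_on_def
  proof (rule cInf_lower)
    show "bdd_below {M. AE x in lebesgue. x \<in> cube a l \<longrightarrow> f x \<le> M}"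
      by (rule bdd_belowI[where m = "f y"]) (use continuous_le_of_AE_le_on_cube[OF cont l y] in auto)
  qed (use max in auto)
  moreover have "f y \<le> ess_sup_on (cube a l) f"
    using max by (intro le_ess_sup_on[OF cont _ l order_refl y]) auto
  ultimately have "ess_sup_on (cube a l) f = f y" by linarith
  then show ?thesis using y max by blast
qed

section \<open>Log-Hoelder exponents\<close>

definition loc_log_Hoelder :: "real \<Rightarrow> ('a::metric_space \<Rightarrow> real) \<Rightarrow> bool" where
  "loc_log_Hoelder C p \<longleftrightarrow>
     (\<forall>x y. 0 < dist x y \<and> dist x y \<le> 1/2 \<longrightarrow> \<bar>p x - p y\<bar> \<le> C / (- ln (dist x y)))"

definition log_decay :: "real \<Rightarrow> real \<Rightarrow> ('a::real_normed_vector \<Rightarrow> real) \<Rightarrow> bool" where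
  "log_decay C p_inf p \<longleftrightarrow> (\<forall>x. \<bar>p x - p_inf\<bar> \<le> C / ln (exp 1 + norm x))"

lemma P_log_iff:
  "P_log p p_inf \<longleftrightarrow>
     p \<in> borel_measurable lebesgue \<and> (\<exists>M. AE x in lebesgue. p x \<le> M) \<and>
     0 < ess_inf_on UNIV p \<and> ess_inf_on UNIV p \<le> p_inf \<and> p_inf \<le> ess_sup_on UNIV p \<and>
     (\<exists>C>0. loc_log_Hoelder C p) \<and> (\<exists>C>0. log_decay C p_inf p)"
  unfolding P_log_def loc_log_Hoelder_def log_decay_def ..

lemma loc_log_Hoelder_continuous:
  assumes Hoelder: "loc_log_Hoelder C p" and C: "0 < C"
  shows "continuous_on UNIV p"
proof -
  have "\<exists>d>0. \<forall>y. dist y x < d \<longrightarrow> dist (p y) (p x) < e" if e: "0 < e" for x e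
  proof -
    define d where "d = min (1/2) (exp (- (C / e + 1)))"
    have d: "0 < d" "d \<le> 1/2" "d \<le> exp (- (C / e + 1))"
      unfolding d_def by auto
    have lnd: "ln d \<le> - (C / e + 1)"
      using d by (metis ln_exp ln_le_cancel_iff exp_gt_zero)
    have "dist (p y) (p x) < e" if y: "dist y x < d" for y
    proof (cases "y = x")
      case False
      then have t: "0 < dist y x" "dist y x \<le> 1/2" using y d by auto
      have "ln (dist y x) < ln d" using t y d(1) by simp
      then have lt: "C / e < - ln (dist y x)" using lnd by linarith
      have "\<bar>p y - p x\<bar> \<le> C / (- ln (dist y x))" using Hoelder t unfolding loc_log_Hoelder_def by blast
      also have "\<dots> < C / (C / e)"
        using lt divide_pos_pos[OF C e] C by (intro divide_strict_left_mono mult_pos_pos) linarith+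
      also have "\<dots> = e" using C e by simp
      finally show ?thesis by (simp add: dist_real_def)
    qed (use e in simp)
    then show ?thesis using d by blast
  qed
  then show ?thesis
    by (simp add: continuous_at_imp_continuous_on continuous_at_eps_delta)
qed

lemma one_le_ln_exp_1_plus: "1 \<le> ln (exp 1 + t)" if "0 \<le> t" for t :: real
  using that by (subst ln_ge_iff) (simp_all add: add_pos_nonneg)

lemma log_decay_lower_bound:
  assumes "log_decay C p_inf p" "0 \<le> C"
  shows "p_inf - C \<le> p x"
proof -
  have "1 \<le> ln (exp 1 + norm x)" by (rule one_le_ln_exp_1_plus) simp
  then have "C / ln (exp 1 + norm x) \<le> C / 1"
    using assms(2) by (intro divide_left_mono) auto
  moreover have "\<bar>p x - p_inf\<bar> \<le> C / ln (exp 1 + norm x)"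
    using assms(1) unfolding log_decay_def by blast
  ultimately show ?thesis unfolding abs_le_iff by linarith
qed

lemma P_log_pointwise:
  fixes p :: "'a::euclidean_space \<Rightarrow> real"
  assumes "P_log p p_inf"
  shows "continuous_on UNIV p" "ess_inf_on UNIV p \<le> p x" "p x \<le> ess_sup_on UNIV p"
proof -
  obtain CH CD where "loc_log_Hoelder CH p" "0 < CH" "log_decay CD p_inf p" "0 < CD"
    and bdd: "\<exists>M. AE x in lebesgue. p x \<le> M"
    using assms unfolding P_log_iff by blast
  show cont: "continuous_on UNIV p" by (rule loc_log_Hoelder_continuous) fact+
  have x: "x \<in> cube x 1" by (rule corner_mem_cube) simp
  have "p_inf - CD \<le> p y" for y
    using log_decay_lower_bound[OF \<open>log_decay CD p_inf p\<close>] \<open>0 < CD\<close> by simp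
  then show "ess_inf_on UNIV p \<le> p x"
    by (intro ess_inf_on_le[OF cont _ zero_less_one subset_UNIV x]) auto
  show "p x \<le> ess_sup_on UNIV p"
    using bdd by (intro le_ess_sup_on[OF cont _ zero_less_one subset_UNIV x]) auto
qed

lemma loc_log_Hoelder_small_cube:
  fixes p :: "'a::euclidean_space \<Rightarrow> real"
  assumes Hoelder: "loc_log_Hoelder C p" and C: "0 \<le> C"
    and l: "0 < l" "real DIM('a) * l \<le> 1/2" and x: "x \<in> cube a l" and y: "y \<in> cube a l"
  shows "(p y - p x) * ln (1 / l) \<le> C * (1 + ln (real DIM('a)) / ln 2)"
proof -
  define n where "n = real DIM('a)"
  have n: "1 \<le> n" unfolding n_def by (simp add: DIM_positive Suc_leI)
  have "ln (n * l) \<le> ln (1/2)" using l n unfolding n_def by simp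
  then have ln2: "ln 2 \<le> - ln (n * l)" by (simp add: ln_div)
  have pos: "0 < - ln (n * l)" using ln2 ln_gt_zero[of 2] by linarith
  have "l \<le> n * l" using n l by simp
  then have l1: "l \<le> 1" using l unfolding n_def by linarith
  show ?thesis
  proof (cases "x = y")
    case False
    have d: "0 < dist x y" "dist x y \<le> n * l"
      using False dist_le_in_cube[OF x y] unfolding n_def by auto
    then have "ln (dist x y) \<le> ln (n * l)" using n l by simp
    have eq: "ln (1 / l) = - ln (n * l) + ln n" using n l by (simp add: ln_mult ln_div)
    have "p y - p x \<le> C / (- ln (dist x y))"
      using Hoelder d l unfolding loc_log_Hoelder_def n_def by (smt (verit))
    also have "\<dots> \<le> C / (- ln (n * l))"
      using \<open>ln (dist x y) \<le> ln (n * l)\<close> pos C by (intro divide_left_mono mult_pos_pos) auto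
    finally have "(p y - p x) * ln (1 / l) \<le> C / (- ln (n * l)) * ln (1 / l)"
      using l l1 by (intro mult_right_mono) auto
    also have "\<dots> = C * (1 + ln n / (- ln (n * l)))" unfolding eq using pos by (simp add: field_simps)
    also have "\<dots> \<le> C * (1 + ln n / ln 2)"
      using ln2 n C pos by (intro mult_left_mono add_left_mono divide_left_mono mult_pos_pos) auto
    finally show ?thesis unfolding n_def .
  qed (use C n in \<open>simp add: n_def\<close>)
qed

lemma loc_log_Hoelder_cube_oscillation:
  fixes p :: "'a::euclidean_space \<Rightarrow> real"
  assumes Hoelder: "loc_log_Hoelder C p" and C: "0 \<le> C"
    and bounds: "\<And>x. m \<le> p x" "\<And>x. p x \<le> P"
  obtains D where "0 \<le> D"
    "\<And>a l x y. 0 < l \<Longrightarrow> l \<le> 1 \<Longrightarrow> x \<in> cube a l \<Longrightarrow> y \<in> cube a l \<Longrightarrow>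
       (p y - p x) * ln (1 / l) \<le> D"
proof -
  define n where "n = real DIM('a)"
  have n: "1 \<le> n" unfolding n_def by (simp add: DIM_positive Suc_leI)
  have mP: "m \<le> P" using bounds order_trans by blast
  define D where "D = C * (1 + ln n / ln 2) + (P - m) * ln (2 * n)"
  have D1: "0 \<le> C * (1 + ln n / ln 2)" and D2: "0 \<le> (P - m) * ln (2 * n)"
    using C n mP by auto
  have osc: "(p y - p x) * ln (1 / l) \<le> D"
    if l: "0 < l" "l \<le> 1" and x: "x \<in> cube a l" and y: "y \<in> cube a l" for a l x y
  proof (cases "n * l \<le> 1/2")
    case True
    then have "(p y - p x) * ln (1 / l) \<le> C * (1 + ln n / ln 2)"
      using loc_log_Hoelder_small_cube[OF Hoelder C l(1) _ x y] unfolding n_def by blast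
    then show ?thesis using D2 unfolding D_def by linarith
  next
    case False
    then have "ln (1 / l) \<le> ln (2 * n)" using l n by (simp add: field_simps)
    then have "(p y - p x) * ln (1 / l) \<le> (P - m) * ln (2 * n)"
      using bounds[of x] bounds[of y] l by (intro mult_mono) auto
    then show ?thesis using D1 unfolding D_def by linarith
  qed
  have "0 \<le> D" using D1 D2 unfolding D_def by simp
  then show ?thesis using osc by (rule that)
qed

lemma cube_volume_powr_le_exp:
  fixes l q t m D :: real
  assumes l: "0 < l" "l \<le> 1" and m: "0 < m" "m \<le> q" and t: "t \<le> q"
    and osc: "(q - t) * ln (1 / l) \<le> D"
  shows "(l ^ n) powr ((t - q) / q) \<le> exp (real n * D / m)"
proof -
  have nonneg: "0 \<le> (q - t) * ln (1 / l)" using t l by simp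
  have "(l ^ n) powr ((t - q) / q) = exp (real n * ((q - t) * ln (1 / l)) / q)"
    using l m by (simp add: powr_def ln_realpow ln_div field_simps)
  also have "\<dots> \<le> exp (real n * D / m)"
  proof -
    have "real n * ((q - t) * ln (1 / l)) / q \<le> real n * D / q"
      using osc m by (intro divide_right_mono mult_left_mono) auto
    also have "\<dots> \<le> real n * D / m"
      using nonneg osc m by (intro divide_left_mono mult_nonneg_nonneg mult_pos_pos) auto
    finally show ?thesis by simp
  qed
  finally show ?thesis .
qed

definition poly_decay :: "'a::euclidean_space \<Rightarrow> real" where
  "poly_decay x = (\<Prod>b\<in>Basis. inverse (1 + (x \<bullet> b)\<^sup>2))"

lemma poly_decay_pos: "0 < poly_decay x"
  unfolding poly_decay_def by (intro prod_pos) (auto simp: add_pos_nonneg)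

lemma borel_measurable_poly_decay [measurable]:
  "(poly_decay :: 'a::euclidean_space \<Rightarrow> real) \<in> borel_measurable lebesgue"
proof -
  have [measurable]: "(\<lambda>x::'a. x) \<in> borel_measurable lebesgue"
    using id_borel_measurable_lebesgue by (simp add: id_def)
  show ?thesis unfolding poly_decay_def by measurable
qed

lemma inverse_poly_decay_le:
  fixes x :: "'a::euclidean_space"
  shows "inverse (poly_decay x) \<le> (exp 1 + norm x) powr (2 * real DIM('a))"
proof -
  have "inverse (poly_decay x) = (\<Prod>b\<in>Basis. 1 + (x \<bullet> b)\<^sup>2)"
    unfolding poly_decay_def by (simp add: prod_inversef[symmetric] o_def)
  also have "\<dots> \<le> (\<Prod>b\<in>(Basis::'a set). (exp 1 + norm x)\<^sup>2)"
  proof (intro prod_mono conjI)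
    fix b :: 'a assume b: "b \<in> Basis"
    have "\<bar>x \<bullet> b\<bar>\<^sup>2 \<le> (norm x)\<^sup>2"
      using Basis_le_norm[OF b] by (intro power_mono) auto
    then have "(x \<bullet> b)\<^sup>2 \<le> (norm x)\<^sup>2" by simp
    moreover have "1 \<le> (exp 1 :: real)\<^sup>2" by (simp add: one_le_power)
    ultimately show "1 + (x \<bullet> b)\<^sup>2 \<le> (exp 1 + norm x)\<^sup>2"
      unfolding power2_sum by (smt (verit) exp_gt_zero norm_ge_zero mult_nonneg_nonneg)
  qed simp
  also have "\<dots> = (exp 1 + norm x) ^ (2 * DIM('a))"
    by (simp add: power_mult)
  also have "\<dots> = (exp 1 + norm x) powr (2 * real DIM('a))"
    by (subst powr_realpow[symmetric]) (auto simp: add_pos_nonneg)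
  finally show ?thesis .
qed

lemma nn_integral_poly_decay_finite:
  "(\<integral>\<^sup>+ x. poly_decay (x::'a::euclidean_space) \<partial>lebesgue) < \<infinity>"
proof -
  have "integrable lborel (\<lambda>t::real. inverse (1 + t\<^sup>2))"
    using integrable_inverse_1_plus_square by (simp add: set_integrable_def einterval_def)
  then have fin: "(\<integral>\<^sup>+ t. ennreal (inverse (1 + t\<^sup>2)) \<partial>lborel) < \<infinity>"
    by (auto dest!: integrableD(2) simp: add_pos_nonneg top.not_eq_extremum)
  have "(\<integral>\<^sup>+ x. poly_decay (x::'a) \<partial>lebesgue)
      = (\<integral>\<^sup>+ x. (\<Prod>b\<in>Basis. ennreal (inverse (1 + ((x::'a) \<bullet> b)\<^sup>2))) \<partial>lborel)"
    unfolding poly_decay_def nn_integral_completion by (subst prod_ennreal) (auto simp: add_pos_nonneg)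
  also have "\<dots> = (\<Prod>b\<in>(Basis::'a set). \<integral>\<^sup>+ t. ennreal (inverse (1 + t\<^sup>2)) \<partial>lborel)"
    by (rule nn_integral_lborel_prod) (auto simp: add_pos_nonneg)
  also have "\<dots> < \<infinity>"
    using fin by (simp del: prod_constant) (metis less_top power_eq_top_ennreal prod_constant)
  finally show ?thesis .
qed

text \<open>
  The factor \<open>(1/u) powr (P - p)\<close> stays bounded because \<open>1/u\<close> grows only polynomially in
  \<open>norm x\<close> while \<open>P - p\<close> decays like \<open>1 / ln (norm x)\<close>.
\<close>
lemma powr_le_mult_powr_above_poly_decay:
  fixes x :: "'a::euclidean_space" and u m p P Ci :: real
  assumes u: "poly_decay x powr (1/m) \<le> u" "u \<le> 1" and m: "0 < m" and Ci: "0 \<le> Ci"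
    and decay: "P - p \<le> Ci / ln (exp 1 + norm x)"
  shows "u powr p \<le> exp (2 * real DIM('a) * Ci / m) * u powr P"
proof -
  define L where "L = ln (exp 1 + norm x)"
  have L1: "1 \<le> L" unfolding L_def by (rule one_le_ln_exp_1_plus) simp
  define h where "h = poly_decay x"
  have h: "0 < h" unfolding h_def using poly_decay_pos .
  have upos: "0 < u" using u(1) h unfolding h_def by (smt (verit) powr_gt_zero)
  have "(1/u) powr (P - p) = u powr (p - P)"
    using upos by (simp add: powr_divide powr_minus_divide[symmetric])
  then have "u powr p = u powr P * (1/u) powr (P - p)"
    by (simp add: powr_add[symmetric])
  also have "(1/u) powr (P - p) \<le> (1/u) powr (Ci / L)"
    using upos u(2) decay unfolding L_def by (intro powr_mono) (auto simp: field_simps)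
  also have "\<dots> \<le> (h powr (-1/m)) powr (Ci / L)"
  proof (rule powr_mono2)
    have "1/u \<le> 1 / (h powr (1/m))" using u(1) h upos unfolding h_def by (intro divide_left_mono) auto
    then show "1/u \<le> h powr (-1/m)" by (simp add: powr_minus_divide)
  qed (use Ci L1 upos in auto)
  also have "\<dots> = (inverse h) powr (Ci / L / m)" using h m
    by (simp add: powr_powr powr_minus_divide powr_divide field_simps)
  also have "\<dots> \<le> ((exp 1 + norm x) powr (2 * real DIM('a))) powr (Ci / L / m)"
    using inverse_poly_decay_le[of x] h Ci L1 m unfolding h_def by (intro powr_mono2) auto
  also have "\<dots> = exp (L * (2 * real DIM('a) * (Ci / L / m)))"
    unfolding L_def using add_pos_nonneg[OF exp_gt_zero[of 1] norm_ge_zero[of x]]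
    by (simp add: powr_powr powr_def mult_ac)
  also have "\<dots> = exp (2 * real DIM('a) * Ci / m)" using L1 by (simp add: field_simps)
  finally show ?thesis using upos by (simp add: mult_left_mono mult.commute)
qed

lemma powr_le_powr_plus_poly_decay:
  fixes x :: "'a::euclidean_space" and u m p P Ci :: real
  assumes u: "0 \<le> u" and m: "0 < m" "m \<le> p" and pP: "p \<le> P" and Ci: "0 \<le> Ci"
    and decay: "P - p \<le> Ci / ln (exp 1 + norm x)"
  shows "u powr p \<le> (1 + exp (2 * real DIM('a) * Ci / m)) * u powr P + poly_decay x"
proof -
  define K where "K = exp (2 * real DIM('a) * Ci / m)"
  have K1: "1 \<le> K" unfolding K_def using Ci m by simp
  have "u powr p \<le> K * u powr P + poly_decay x"
  proof (cases "u \<ge> 1")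
    case True
    then have "u powr p \<le> u powr P" using pP by (intro powr_mono) auto
    also have "\<dots> \<le> K * u powr P" using K1 by (simp add: mult_le_cancel_right1)
    finally show ?thesis using poly_decay_pos[of x] by simp
  next
    case False
    show ?thesis
    proof (cases "u < poly_decay x powr (1/m)")
      case True
      have "u powr p \<le> u powr m" using u False m by (intro powr_mono') auto
      also have "\<dots> \<le> (poly_decay x powr (1/m)) powr m" using True u m by (intro powr_mono2) auto
      also have "\<dots> = poly_decay x" using m poly_decay_pos[of x] by (simp add: powr_powr)
      finally show ?thesis using K1 by (smt (verit) powr_ge_zero mult_nonneg_nonneg)
    next
      case False
      then have "u powr p \<le> K * u powr P"
        unfolding K_def using \<open>\<not> 1 \<le> u\<close> m Ci decay
        by (intro powr_le_mult_powr_above_poly_decay) auto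
      then show ?thesis using poly_decay_pos[of x] by simp
    qed
  qed
  also have "\<dots> \<le> (1 + K) * u powr P + poly_decay x" by (simp add: algebra_simps)
  finally show ?thesis unfolding K_def .
qed

section \<open>The modular of the variable Lebesgue space\<close>

definition var_modular :: "('a::euclidean_space \<Rightarrow> real) \<Rightarrow> ('a \<Rightarrow> real) \<Rightarrow> real \<Rightarrow> ennreal" where
  "var_modular p g lam = (\<integral>\<^sup>+ x. ennreal ((\<bar>g x\<bar> / lam) powr p x) \<partial>lebesgue)"

lemma var_norm_le_of_modular_le_1:
  assumes "0 < lam" "var_modular p g lam \<le> 1"
  shows "var_norm p g \<le> lam"
  unfolding var_norm_def using assms unfolding var_modular_def
  by (intro cInf_lower bdd_belowI[where m = 0]) auto

lemma le_var_norm_of_modular: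
  assumes "\<exists>lam>0. var_modular p g lam \<le> 1"
    and "\<And>lam. 0 < lam \<Longrightarrow> var_modular p g lam \<le> 1 \<Longrightarrow> B \<le> lam"
  shows "B \<le> var_norm p g"
  unfolding var_norm_def by (rule cInf_greatest) (use assms in \<open>auto simp: var_modular_def\<close>)

lemma var_modular_rescale:
  fixes g p :: "'a::euclidean_space \<Rightarrow> real"
  assumes [measurable]: "g \<in> borel_measurable lebesgue" "p \<in> borel_measurable lebesgue"
    and m: "0 < m" "\<And>x. m \<le> p x" and lam: "0 < lam" and A: "1 \<le> A"
    and modular: "var_modular p g lam \<le> ennreal A"
  shows "var_modular p g (A powr (1/m) * lam) \<le> 1"
proof -
  define k where "k = A powr (1/m)"
  have k1: "1 \<le> k" unfolding k_def using A m by (simp add: ge_one_powr_ge_zero)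
  have kA: "k powr m = A" unfolding k_def using A m by (simp add: powr_powr)
  have pw: "(\<bar>g x\<bar> / (k * lam)) powr p x \<le> (1/A) * (\<bar>g x\<bar> / lam) powr p x" for x
  proof -
    have "(\<bar>g x\<bar> / (k * lam)) powr p x = (\<bar>g x\<bar> / lam) powr p x / k powr p x"
      using k1 lam by (simp add: powr_divide divide_divide_eq_left powr_mult mult.commute)
    also have "\<dots> \<le> (\<bar>g x\<bar> / lam) powr p x / k powr m"
      using k1 m by (intro divide_left_mono powr_mono mult_pos_pos) auto
    finally show ?thesis using kA by simp
  qed
  have "var_modular p g (k * lam) \<le> (\<integral>\<^sup>+ x. ennreal (1/A) * ennreal ((\<bar>g x\<bar> / lam) powr p x) \<partial>lebesgue)"
    unfolding var_modular_def using pw A by (intro nn_integral_mono) (simp add: ennreal_mult[symmetric])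
  also have "\<dots> = ennreal (1/A) * var_modular p g lam"
    unfolding var_modular_def by (rule nn_integral_cmult) measurable
  also have "\<dots> \<le> ennreal (1/A) * ennreal A" by (intro mult_left_mono modular) auto
  also have "\<dots> = 1" using A by (simp add: ennreal_mult[symmetric])
  finally show ?thesis unfolding k_def .
qed

lemma weight_measurable_cube:
  assumes "weight \<omega>"
  shows "(\<lambda>x. indicator (cube a l) x * \<omega> x) \<in> borel_measurable lebesgue"
proof -
  have "set_integrable lebesgue (cube a l) \<omega>" using assms compact_cube unfolding weight_def by blast
  then show ?thesis unfolding set_integrable_def by (simp add: borel_measurable_integrable)
qed

lemma RH_powrD:
  assumes "RH (s * P) (\<lambda>x. \<omega> x powr (1 / s))" "0 < s"
  shows "\<exists>C>0. \<forall>a l. 0 < l \<longrightarrow> set_integrable lebesgue (cube a l) (\<lambda>x. \<omega> x powr P) \<and>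
    (1 / measure lebesgue (cube a l) * (\<integral>x\<in>cube a l. \<omega> x powr P \<partial>lebesgue)) powr (1 / (s * P))
      \<le> C * (1 / measure lebesgue (cube a l) * (\<integral>x\<in>cube a l. \<omega> x powr (1 / s) \<partial>lebesgue))"
  using assms unfolding RH_def powr_powr by simp

locale cube_weight =
  fixes \<omega> :: "'a::euclidean_space \<Rightarrow> real" and P :: real
  assumes P_pos: "0 < P"
    and AE_pos: "AE x in lebesgue. 0 < \<omega> x"
    and measurable_cube [measurable]: "\<And>a l. (\<lambda>x. indicator (cube a l) x * \<omega> x) \<in> borel_measurable lebesgue"
    and integrable_powr_cube: "\<And>a l. 0 < l \<Longrightarrow> set_integrable lebesgue (cube a l) (\<lambda>x. \<omega> x powr P)"
begin

lemma measurable_abs_powr_cube [measurable]: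
  "(\<lambda>x. indicator (cube a l) x * \<bar>\<omega> x\<bar> powr e) \<in> borel_measurable lebesgue"
proof -
  have "(\<lambda>x. \<bar>indicator (cube a l) x * \<omega> x\<bar> powr e) \<in> borel_measurable lebesgue" by measurable
  moreover have "\<bar>indicator (cube a l) x * \<omega> x\<bar> powr e = indicator (cube a l) x * \<bar>\<omega> x\<bar> powr e" for x
    by (simp add: indicator_def)
  ultimately show ?thesis by simp
qed

lemma integrable_powr_cube_le:
  assumes l: "0 < l" and e: "0 < e" "e \<le> P"
  shows "set_integrable lebesgue (cube a l) (\<lambda>x. \<omega> x powr e)"
proof (rule set_integrable_bound)
  show "set_integrable lebesgue (cube a l) (\<lambda>x. \<omega> x powr P + 1)"
    using integrable_powr_cube[OF l] set_integrable_const_cube by (rule set_integral_add(1))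
  have "(\<lambda>x. (indicator (cube a l) x * \<omega> x) powr e) \<in> borel_measurable lebesgue" by measurable
  moreover have "(indicator (cube a l) x * \<omega> x) powr e = indicator (cube a l) x *\<^sub>R \<omega> x powr e" for x
    by (simp add: indicator_def)
  ultimately show "set_borel_measurable lebesgue (cube a l) (\<lambda>x. \<omega> x powr e)"
    unfolding set_borel_measurable_def by simp
  show "AE x in lebesgue. x \<in> cube a l \<longrightarrow> norm (\<omega> x powr e) \<le> norm (\<omega> x powr P + 1)"
    using AE_pos by eventually_elim (use powr_le_powr_plus_1 e in auto)
qed

lemma nn_integral_abs_powr_cube:
  assumes l: "0 < l" and e: "0 < e" "e \<le> P"
  shows "(\<integral>\<^sup>+ x. ennreal (indicator (cube a l) x * \<bar>\<omega> x\<bar> powr e) \<partial>lebesgue)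
    = ennreal (\<integral>x\<in>cube a l. \<omega> x powr e \<partial>lebesgue)"
proof -
  have "(\<integral>\<^sup>+ x. ennreal (indicator (cube a l) x * \<bar>\<omega> x\<bar> powr e) \<partial>lebesgue)
      = (\<integral>\<^sup>+ x. ennreal (indicator (cube a l) x *\<^sub>R \<omega> x powr e) \<partial>lebesgue)"
  proof (rule nn_integral_cong_AE)
    show "AE x in lebesgue. ennreal (indicator (cube a l) x * \<bar>\<omega> x\<bar> powr e)
        = ennreal (indicator (cube a l) x *\<^sub>R \<omega> x powr e)"
      using AE_pos by eventually_elim (simp add: indicator_def)
  qed
  also have "\<dots> = ennreal (\<integral>x\<in>cube a l. \<omega> x powr e \<partial>lebesgue)"
    using integrable_powr_cube_le[OF l e] unfolding set_lebesgue_integral_def set_integrable_def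
    by (intro nn_integral_eq_integral) auto
  finally show ?thesis .
qed

lemma set_integral_powr_cube_pos:
  assumes l: "0 < l" and e: "0 < e" "e \<le> P"
  shows "0 < (\<integral>x\<in>cube a l. \<omega> x powr e \<partial>lebesgue)"
proof -
  have "(\<integral>\<^sup>+ x. ennreal (indicator (cube a l) x * \<bar>\<omega> x\<bar> powr e) \<partial>lebesgue) \<noteq> 0"
  proof
    assume "(\<integral>\<^sup>+ x. ennreal (indicator (cube a l) x * \<bar>\<omega> x\<bar> powr e) \<partial>lebesgue) = 0"
    then have "AE x in lebesgue. ennreal (indicator (cube a l) x * \<bar>\<omega> x\<bar> powr e) = 0"
      by (subst (asm) nn_integral_0_iff_AE) auto
    then have "AE x in lebesgue. x \<notin> cube a l"
      using AE_pos by eventually_elim (auto simp: indicator_def)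
    then show False using not_AE_notin_cube[OF l] by blast
  qed
  then show ?thesis unfolding nn_integral_abs_powr_cube[OF assms] by (metis ennreal_eq_0_iff not_le)
qed

text \<open>A weak form of Hoelder's inequality for means, obtained by integrating \<open>t powr (q/P) \<le> t + 1\<close>.\<close>
lemma set_integral_powr_le_mean_powr:
  assumes l: "0 < l" and q: "0 < q" "q \<le> P"
  shows "(\<integral>x\<in>cube a l. \<omega> x powr q \<partial>lebesgue)
    \<le> 2 * l ^ DIM('a) * (1 / l ^ DIM('a) * (\<integral>x\<in>cube a l. \<omega> x powr P \<partial>lebesgue)) powr (q / P)"
proof -
  define V where "V = l ^ DIM('a)"
  define X where "X = 1 / V * (\<integral>x\<in>cube a l. \<omega> x powr P \<partial>lebesgue)"
  define Y where "Y = X powr (q / P)"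
  have V: "0 < V" unfolding V_def using l by simp
  have X: "0 < X" unfolding X_def using V set_integral_powr_cube_pos[OF l P_pos order_refl] by simp
  have Y: "0 < Y" unfolding Y_def using X by simp
  have qP: "0 < q / P" "q / P \<le> 1" using q P_pos by auto
  have pw: "\<omega> x powr q \<le> Y + Y / X * \<omega> x powr P" if "0 < \<omega> x" for x
  proof -
    have "(\<omega> x powr P / X) powr (q / P) \<le> \<omega> x powr P / X + 1"
      using powr_le_powr_plus_1[OF _ qP] X by (simp add: powr_one)
    moreover have "(\<omega> x powr P / X) powr (q / P) = \<omega> x powr q / Y"
      unfolding Y_def using that X P_pos by (simp add: powr_divide powr_powr)
    ultimately show ?thesis using X Y by (simp add: field_simps)
  qed
  have "set_integrable lebesgue (cube a l) (\<lambda>x. Y + Y / X * \<omega> x powr P)"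
    by (intro set_integral_add(1) set_integrable_mult_right set_integrable_const_cube
        integrable_powr_cube l)
  moreover have "AE x \<in> cube a l in lebesgue. \<omega> x powr q \<le> Y + Y / X * \<omega> x powr P"
    using AE_pos by eventually_elim (use pw in auto)
  ultimately have "(\<integral>x\<in>cube a l. \<omega> x powr q \<partial>lebesgue) \<le> (\<integral>x\<in>cube a l. Y + Y / X * \<omega> x powr P \<partial>lebesgue)"
    using integrable_powr_cube_le[OF l q] by (intro set_integral_mono_AE)
  also have "\<dots> = (\<integral>x\<in>cube a l. Y \<partial>lebesgue) + (\<integral>x\<in>cube a l. Y / X * \<omega> x powr P \<partial>lebesgue)"
    by (intro set_integral_add(2) set_integrable_mult_right set_integrable_const_cube
        integrable_powr_cube l)
  also have "\<dots> = Y * V + Y / X * (\<integral>x\<in>cube a l. \<omega> x powr P \<partial>lebesgue)"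
  proof -
    have "emeasure lebesgue (cube a l) \<noteq> \<infinity>" using emeasure_cube[of l a] l by simp
    then show ?thesis using l by (simp add: set_integral_const[OF sets_cube] measure_cube V_def)
  qed
  also have "\<dots> = 2 * V * Y"
    unfolding X_def using V set_integral_powr_cube_pos[OF l P_pos order_refl, where a = a]
    by (simp add: field_simps)
  finally show ?thesis unfolding Y_def X_def V_def .
qed

lemma var_modular_cube_le:
  fixes p H :: "'a \<Rightarrow> real"
  assumes l: "0 < l" and q: "0 < q" "q \<le> P" and K: "0 \<le> K"
    and pw: "\<And>x u. x \<in> cube a l \<Longrightarrow> 0 \<le> u \<Longrightarrow> u powr p x \<le> K * u powr q + H x"
    and H: "\<And>x. 0 \<le> H x" and H_measurable [measurable]: "H \<in> borel_measurable lebesgue"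
    and Hb: "(\<integral>\<^sup>+ x. H x \<partial>lebesgue) \<le> ennreal Hb" "0 \<le> Hb"
  shows "var_modular p (\<lambda>x. indicator (cube a l) x * \<omega> x)
      ((\<integral>x\<in>cube a l. \<omega> x powr q \<partial>lebesgue) powr (1 / q)) \<le> ennreal (K + Hb)"
proof -
  define I where "I = (\<integral>x\<in>cube a l. \<omega> x powr q \<partial>lebesgue)"
  define R where "R = I powr (1 / q)"
  have I: "0 < I" unfolding I_def using set_integral_powr_cube_pos[OF l q] .
  have R: "0 < R" and RI: "R powr q = I" unfolding R_def using I q by (simp_all add: powr_powr)
  have pw': "(\<bar>indicator (cube a l) x * \<omega> x\<bar> / R) powr p x
      \<le> K / I * (indicator (cube a l) x * \<bar>\<omega> x\<bar> powr q) + H x" for x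
  proof (cases "x \<in> cube a l")
    case True
    have "(\<bar>\<omega> x\<bar> / R) powr p x \<le> K * (\<bar>\<omega> x\<bar> / R) powr q + H x" using pw[OF True] R by simp
    also have "(\<bar>\<omega> x\<bar> / R) powr q = \<bar>\<omega> x\<bar> powr q / I" using R RI by (simp add: powr_divide)
    finally show ?thesis using True by simp
  qed (use H in simp)
  have "var_modular p (\<lambda>x. indicator (cube a l) x * \<omega> x) R
      \<le> (\<integral>\<^sup>+ x. ennreal (K / I) * ennreal (indicator (cube a l) x * \<bar>\<omega> x\<bar> powr q) + ennreal (H x) \<partial>lebesgue)"
    unfolding var_modular_def using pw' K I H
    by (intro nn_integral_mono) (simp add: ennreal_mult[symmetric] ennreal_plus[symmetric] del: ennreal_plus)
  also have "\<dots> = ennreal (K / I) * ennreal I + (\<integral>\<^sup>+ x. H x \<partial>lebesgue)"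
    unfolding I_def by (subst nn_integral_add) (auto simp: nn_integral_cmult nn_integral_abs_powr_cube[OF l q])
  also have "\<dots> \<le> ennreal (K / I) * ennreal I + ennreal Hb"
    using Hb(1) by (rule add_left_mono)
  also have "\<dots> = ennreal (K + Hb)"
    using I K Hb(2) by (simp add: ennreal_mult[symmetric] ennreal_plus[symmetric] del: ennreal_plus)
  finally show ?thesis unfolding R_def I_def .
qed

lemma mean_powr_cube_le_modular:
  fixes p :: "'a \<Rightarrow> real"
  assumes p_measurable [measurable]: "p \<in> borel_measurable lebesgue"
    and l: "0 < l" and r: "0 < r" "r \<le> P" and q: "0 < q"
    and rp: "\<And>x. x \<in> cube a l \<Longrightarrow> r < p x"
    and B: "0 \<le> B" "\<And>x. x \<in> cube a l \<Longrightarrow> (l ^ DIM('a)) powr ((p x - q) / q) \<le> B"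
    and lam: "0 < lam" and modular: "var_modular p (\<lambda>x. indicator (cube a l) x * \<omega> x) lam \<le> 1"
  shows "1 / l ^ DIM('a) * (\<integral>x\<in>cube a l. \<omega> x powr r \<partial>lebesgue)
    \<le> lam powr r * (l ^ DIM('a)) powr (- r / q) * (B + 1)"
proof -
  define V where "V = (l ^ DIM('a) :: real)"
  have V: "0 < V" unfolding V_def using l by simp
  define c1 where "c1 = lam powr r * B * V powr (1 - r / q)"
  define c2 where "c2 = lam powr r * V powr (- r / q)"
  have c: "0 \<le> c1" "0 \<le> c2" unfolding c1_def c2_def using B by simp_all
  have pw: "indicator (cube a l) x * \<bar>\<omega> x\<bar> powr r
      \<le> c1 * (\<bar>indicator (cube a l) x * \<omega> x\<bar> / lam) powr p x + c2 * indicator (cube a l) x" for x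
  proof (cases "x \<in> cube a l")
    case True
    have "(\<bar>\<omega> x\<bar> / lam) powr r
        \<le> V powr (1 - r / q) * B * (\<bar>\<omega> x\<bar> / lam) powr p x + V powr (- r / q)"
      using l lam B(2)[OF True] unfolding V_def by (intro powr_le_Young_volume rp[OF True] r(1) q) auto
    then have "lam powr r * (\<bar>\<omega> x\<bar> / lam) powr r
        \<le> lam powr r * (V powr (1 - r / q) * B * (\<bar>\<omega> x\<bar> / lam) powr p x + V powr (- r / q))"
      by (intro mult_left_mono) auto
    moreover have "lam powr r * (\<bar>\<omega> x\<bar> / lam) powr r = \<bar>\<omega> x\<bar> powr r" using lam by (simp add: powr_divide)
    ultimately show ?thesis using True unfolding c1_def c2_def by (simp add: algebra_simps)
  qed (use c in simp)
  have "ennreal (\<integral>x\<in>cube a l. \<omega> x powr r \<partial>lebesgue)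
      = (\<integral>\<^sup>+ x. ennreal (indicator (cube a l) x * \<bar>\<omega> x\<bar> powr r) \<partial>lebesgue)"
    using nn_integral_abs_powr_cube[OF l r] by simp
  also have "\<dots> \<le> (\<integral>\<^sup>+ x. ennreal c1 * ennreal ((\<bar>indicator (cube a l) x * \<omega> x\<bar> / lam) powr p x)
      + ennreal c2 * indicator (cube a l) x \<partial>lebesgue)"
    using pw c by (intro nn_integral_mono)
      (simp add: ennreal_mult[symmetric] ennreal_plus[symmetric] ennreal_indicator[symmetric] del: ennreal_plus)
  also have "\<dots> = ennreal c1 * var_modular p (\<lambda>x. indicator (cube a l) x * \<omega> x) lam
      + ennreal c2 * emeasure lebesgue (cube a l)"
    unfolding var_modular_def by (subst nn_integral_add) (auto simp: nn_integral_cmult)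
  also have "\<dots> \<le> ennreal c1 * 1 + ennreal c2 * ennreal V"
    using modular emeasure_cube[of l a] l unfolding V_def by (intro add_mono mult_left_mono) auto
  also have "\<dots> = ennreal (c1 + c2 * V)"
    using c V by (simp add: ennreal_mult[symmetric] ennreal_plus[symmetric] del: ennreal_plus)
  finally have "(\<integral>x\<in>cube a l. \<omega> x powr r \<partial>lebesgue) \<le> c1 + c2 * V"
    using c V by (subst (asm) ennreal_le_iff) auto
  then have "1 / V * (\<integral>x\<in>cube a l. \<omega> x powr r \<partial>lebesgue) \<le> 1 / V * (c1 + c2 * V)"
    using V by (intro mult_left_mono) auto
  also have "1 / V * (c1 + c2 * V) = lam powr r * V powr (- r / q) * (B + 1)"
    unfolding c1_def c2_def using V by (simp add: algebra_simps powr_diff powr_minus field_simps)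
  finally show ?thesis unfolding V_def .
qed

lemma set_integral_powr_root_le_of_RH:
  fixes p :: "'a \<Rightarrow> real"
  assumes p_measurable: "p \<in> borel_measurable lebesgue"
    and l: "0 < l" and q: "0 < q" "q \<le> P" and s: "0 < s" "1 / s \<le> P"
    and sp: "\<And>x. x \<in> cube a l \<Longrightarrow> 1 / s < p x"
    and B: "0 \<le> B" "\<And>x. x \<in> cube a l \<Longrightarrow> (l ^ DIM('a)) powr ((p x - q) / q) \<le> B"
    and CR: "0 < CR"
    and RH: "(1 / measure lebesgue (cube a l) * (\<integral>x\<in>cube a l. \<omega> x powr P \<partial>lebesgue)) powr (1 / (s * P))
      \<le> CR * (1 / measure lebesgue (cube a l) * (\<integral>x\<in>cube a l. \<omega> x powr (1 / s) \<partial>lebesgue))"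
    and lam: "0 < lam" and modular: "var_modular p (\<lambda>x. indicator (cube a l) x * \<omega> x) lam \<le> 1"
  shows "(\<integral>x\<in>cube a l. \<omega> x powr q \<partial>lebesgue) powr (1 / q) \<le> 2 powr (1 / q) * (CR * (B + 1)) powr s * lam"
proof -
  define V where "V = (l ^ DIM('a) :: real)"
  define X where "X = 1 / V * (\<integral>x\<in>cube a l. \<omega> x powr P \<partial>lebesgue)"
  define K where "K = CR * (B + 1)"
  have V: "0 < V" unfolding V_def using l by simp
  have X: "0 < X" unfolding X_def using V set_integral_powr_cube_pos[OF l P_pos order_refl] by simp
  have K: "0 < K" unfolding K_def using CR B by simp
  have "1 / V * (\<integral>x\<in>cube a l. \<omega> x powr (1 / s) \<partial>lebesgue) \<le> lam powr (1 / s) * V powr (- (1 / s) / q) * (B + 1)"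
    using mean_powr_cube_le_modular[OF p_measurable l _ s(2) q(1) sp B lam modular] s unfolding V_def by simp
  then have "X powr (1 / (s * P)) \<le> K * lam powr (1 / s) * V powr (- (1 / s) / q)"
    using RH CR unfolding X_def K_def V_def measure_cube[OF less_imp_le[OF l]]
    by (smt (verit, best) mult.assoc mult.commute mult_left_mono)
  then have "(X powr (1 / (s * P))) powr (q * s) \<le> (K * lam powr (1 / s) * V powr (- (1 / s) / q)) powr (q * s)"
    using q s by (intro powr_mono2) auto
  moreover have "(X powr (1 / (s * P))) powr (q * s) = X powr (q / P)"
    using s P_pos by (simp add: powr_powr)
  moreover have "(K * lam powr (1 / s) * V powr (- (1 / s) / q)) powr (q * s) = K powr (q * s) * lam powr q * V powr (-1)"
    using K lam V q s by (simp add: powr_mult powr_powr)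
  ultimately have X_bound: "X powr (q / P) \<le> K powr (q * s) * lam powr q * V powr (-1)" by simp
  have "(\<integral>x\<in>cube a l. \<omega> x powr q \<partial>lebesgue) \<le> 2 * V * X powr (q / P)"
    using set_integral_powr_le_mean_powr[OF l q] unfolding X_def V_def .
  also have "\<dots> \<le> 2 * V * (K powr (q * s) * lam powr q * V powr (-1))"
    using X_bound V by (intro mult_left_mono) auto
  also have "\<dots> = 2 * K powr (q * s) * lam powr q"
    using V by (simp add: powr_minus field_simps)
  finally have "(\<integral>x\<in>cube a l. \<omega> x powr q \<partial>lebesgue) powr (1 / q) \<le> (2 * K powr (q * s) * lam powr q) powr (1 / q)"
    using set_integral_powr_cube_pos[OF l q, where a = a] q by (intro powr_mono2) auto
  also have "\<dots> = 2 powr (1 / q) * K powr s * lam"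
    using K lam q by (simp add: powr_mult powr_powr)
  finally show ?thesis unfolding K_def .
qed

end

section \<open>Weighted norms of characteristic functions of cubes\<close>

locale Plog_RH_weight = cube_weight \<omega> P
  for \<omega> :: "'a::euclidean_space \<Rightarrow> real" and P :: real +
  fixes p :: "'a \<Rightarrow> real" and m s CH CD CR :: real
  assumes p_measurable [measurable]: "p \<in> borel_measurable lebesgue"
    and m_pos: "0 < m" and p_ge: "\<And>x. m \<le> p x" and p_le: "\<And>x. p x \<le> P"
    and s_pos: "0 < s" and s_gt: "1 / s < m"
    and Hoelder: "loc_log_Hoelder CH p" and CH_pos: "0 < CH"
    and decay: "log_decay CD P p" and CD_nonneg: "0 \<le> CD"
    and CR_pos: "0 < CR"
    and RH: "\<And>a l. 0 < l \<Longrightarrow>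
      (1 / measure lebesgue (cube a l) * (\<integral>x\<in>cube a l. \<omega> x powr P \<partial>lebesgue)) powr (1 / (s * P))
        \<le> CR * (1 / measure lebesgue (cube a l) * (\<integral>x\<in>cube a l. \<omega> x powr (1 / s) \<partial>lebesgue))"
begin

lemma m_le_P: "m \<le> P"
  using p_ge p_le order_trans by blast

lemma var_modular_cube_decay:
  "\<exists>C>0. \<forall>a l. 0 < l \<longrightarrow> var_modular p (\<lambda>x. indicator (cube a l) x * \<omega> x)
    (C * (\<integral>x\<in>cube a l. \<omega> x powr P \<partial>lebesgue) powr (1 / P)) \<le> 1"
proof -
  define K where "K = 1 + exp (2 * real DIM('a) * CD / m)"
  define Hb where "Hb = enn2real (\<integral>\<^sup>+ x. poly_decay (x::'a) \<partial>lebesgue)"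
  have K: "1 \<le> K" unfolding K_def by simp
  have fin: "(\<integral>\<^sup>+ x. poly_decay (x::'a) \<partial>lebesgue) < top"
    using nn_integral_poly_decay_finite by simp
  have Hb: "(\<integral>\<^sup>+ x. poly_decay (x::'a) \<partial>lebesgue) \<le> ennreal Hb" "0 \<le> Hb"
    unfolding Hb_def ennreal_enn2real[OF fin] by simp_all
  have pw: "u powr p x \<le> K * u powr P + poly_decay x" if "0 \<le> u" for x u
  proof -
    have "\<bar>p x - P\<bar> \<le> CD / ln (exp 1 + norm x)" using decay unfolding log_decay_def by blast
    then have "P - p x \<le> CD / ln (exp 1 + norm x)" by linarith
    then show ?thesis
      unfolding K_def by (rule powr_le_powr_plus_poly_decay[OF that m_pos p_ge p_le CD_nonneg])
  qed
  have "var_modular p (\<lambda>x. indicator (cube a l) x * \<omega> x)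
      ((K + Hb) powr (1 / m) * (\<integral>x\<in>cube a l. \<omega> x powr P \<partial>lebesgue) powr (1 / P)) \<le> 1"
    if l: "0 < l" for a l
    using set_integral_powr_cube_pos[OF l P_pos order_refl, where a = a] K Hb
      var_modular_cube_le[OF l P_pos order_refl _ pw _ borel_measurable_poly_decay Hb]
    by (intro var_modular_rescale[OF measurable_cube p_measurable m_pos p_ge]) (auto intro: less_imp_le poly_decay_pos)
  moreover have "0 < (K + Hb) powr (1 / m)" using K Hb by simp
  ultimately show ?thesis by blast
qed

lemma var_norm_cube_le:
  "\<exists>C>0. \<forall>a l. 0 < l \<longrightarrow> var_norm p (\<lambda>x. indicator (cube a l) x * \<omega> x)
    \<le> C * (\<integral>x\<in>cube a l. \<omega> x powr P \<partial>lebesgue) powr (1 / P)"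
proof -
  obtain C where C: "0 < C" "\<forall>a l. 0 < l \<longrightarrow> var_modular p (\<lambda>x. indicator (cube a l) x * \<omega> x)
      (C * (\<integral>x\<in>cube a l. \<omega> x powr P \<partial>lebesgue) powr (1 / P)) \<le> 1"
    using var_modular_cube_decay by blast
  have "var_norm p (\<lambda>x. indicator (cube a l) x * \<omega> x)
      \<le> C * (\<integral>x\<in>cube a l. \<omega> x powr P \<partial>lebesgue) powr (1 / P)" if l: "0 < l" for a l
    using C l set_integral_powr_cube_pos[OF l P_pos order_refl, where a = a]
    by (intro var_norm_le_of_modular_le_1) auto
  then show ?thesis using C(1) by blast
qed

lemma var_modular_small_cube:
  assumes l: "0 < l" "l \<le> 1" and y: "y \<in> cube a l" and max: "\<And>x. x \<in> cube a l \<Longrightarrow> p x \<le> p y"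
  shows "var_modular p (\<lambda>x. indicator (cube a l) x * \<omega> x)
    (2 powr (1 / m) * (\<integral>x\<in>cube a l. \<omega> x powr p y \<partial>lebesgue) powr (1 / p y)) \<le> 1"
proof -
  have q: "0 < p y" "p y \<le> P" using m_pos p_ge[of y] p_le[of y] by auto
  have pw: "u powr p x \<le> 1 * u powr p y + indicator (cube a l) x" if "x \<in> cube a l" "0 \<le> u" for x u
    using powr_le_powr_plus_1[OF that(2) _ max[OF that(1)]] m_pos p_ge[of x] that(1) by simp
  have "(\<integral>\<^sup>+ x. ennreal (indicator (cube a l) x) \<partial>lebesgue) = emeasure lebesgue (cube a l)"
    unfolding ennreal_indicator by (rule nn_integral_indicator[OF sets_cube])
  also have "\<dots> = ennreal (l ^ DIM('a))" by (rule emeasure_cube) (use l in simp)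
  also have "\<dots> \<le> ennreal 1" using l by (intro ennreal_leI) (simp add: power_le_one)
  finally have "var_modular p (\<lambda>x. indicator (cube a l) x * \<omega> x)
      ((\<integral>x\<in>cube a l. \<omega> x powr p y \<partial>lebesgue) powr (1 / p y)) \<le> ennreal (1 + 1)"
    by (intro var_modular_cube_le[OF l(1) q _ pw]) auto
  then show ?thesis
    using set_integral_powr_cube_pos[OF l(1) q, where a = a]
    by (intro var_modular_rescale[OF measurable_cube p_measurable m_pos p_ge]) auto
qed

lemma cube_norm_le_var_norm:
  assumes l: "0 < l" and q: "m \<le> q" "q \<le> P"
    and B: "0 \<le> B" "\<And>x. x \<in> cube a l \<Longrightarrow> (l ^ DIM('a)) powr ((p x - q) / q) \<le> B"
  shows "(\<integral>x\<in>cube a l. \<omega> x powr q \<partial>lebesgue) powr (1 / q)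
    \<le> 2 powr (1 / m) * (CR * (B + 1)) powr s * var_norm p (\<lambda>x. indicator (cube a l) x * \<omega> x)"
proof -
  define K where "K = 2 powr (1 / m) * (CR * (B + 1)) powr s"
  have K: "0 < K" unfolding K_def using CR_pos B by simp
  have q_pos: "0 < q" using m_pos q by linarith
  have "(\<integral>x\<in>cube a l. \<omega> x powr q \<partial>lebesgue) powr (1 / q) / K \<le> var_norm p (\<lambda>x. indicator (cube a l) x * \<omega> x)"
  proof (rule le_var_norm_of_modular)
    obtain C where "0 < C" "\<forall>a l. 0 < l \<longrightarrow> var_modular p (\<lambda>x. indicator (cube a l) x * \<omega> x)
        (C * (\<integral>x\<in>cube a l. \<omega> x powr P \<partial>lebesgue) powr (1 / P)) \<le> 1"
      using var_modular_cube_decay by blast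
    then show "\<exists>lam>0. var_modular p (\<lambda>x. indicator (cube a l) x * \<omega> x) lam \<le> 1"
      using set_integral_powr_cube_pos[OF l P_pos order_refl, where a = a] l
      by (intro exI[of _ "C * (\<integral>x\<in>cube a l. \<omega> x powr P \<partial>lebesgue) powr (1 / P)"]) auto
  next
    fix lam assume lam: "0 < lam" and modular: "var_modular p (\<lambda>x. indicator (cube a l) x * \<omega> x) lam \<le> 1"
    have "1 / s \<le> P" using s_gt m_le_P by linarith
    moreover have "1 / s < p x" for x using s_gt p_ge[of x] by linarith
    ultimately have "(\<integral>x\<in>cube a l. \<omega> x powr q \<partial>lebesgue) powr (1 / q) \<le> 2 powr (1 / q) * (CR * (B + 1)) powr s * lam"
      using set_integral_powr_root_le_of_RH[OF p_measurable l q_pos q(2) s_pos _ _ B CR_pos RH[OF l] lam modular]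
      by blast
    also have "\<dots> \<le> K * lam"
      unfolding K_def using q m_pos q_pos CR_pos B lam
      by (intro mult_right_mono powr_mono) (auto simp: frac_le)
    finally show "(\<integral>x\<in>cube a l. \<omega> x powr q \<partial>lebesgue) powr (1 / q) / K \<le> lam"
      using K by (simp add: divide_le_eq mult.commute)
  qed
  then show ?thesis using K unfolding K_def[symmetric] by (simp add: divide_le_eq mult.commute)
qed

lemma var_norm_large_cube:
  assumes l: "1 < l" and B: "1 \<le> B"
  shows "(\<integral>x\<in>cube a l. \<omega> x powr P \<partial>lebesgue) powr (1 / P)
    \<le> 2 powr (1 / m) * (CR * (B + 1)) powr s * var_norm p (\<lambda>x. indicator (cube a l) x * \<omega> x)"
proof (rule cube_norm_le_var_norm)
  fix x
  have "(l ^ DIM('a)) powr ((p x - P) / P) \<le> (l ^ DIM('a)) powr 0"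
    using l p_le[of x] P_pos by (intro powr_mono) (auto simp: divide_nonpos_pos)
  then show "(l ^ DIM('a)) powr ((p x - P) / P) \<le> B" using l B by simp
qed (use l B m_le_P in auto)

lemma var_norm_small_cube:
  assumes l: "0 < l" "l \<le> 1"
    and osc: "\<And>x y. x \<in> cube a l \<Longrightarrow> y \<in> cube a l \<Longrightarrow> (p y - p x) * ln (1 / l) \<le> D"
  defines "q \<equiv> ess_sup_on (cube a l) p"
  shows "(\<integral>x\<in>cube a l. \<omega> x powr q \<partial>lebesgue) powr (1 / q)
      \<le> 2 powr (1 / m) * (CR * (exp (real DIM('a) * D / m) + 1)) powr s
        * var_norm p (\<lambda>x. indicator (cube a l) x * \<omega> x)"
    and "var_norm p (\<lambda>x. indicator (cube a l) x * \<omega> x)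
      \<le> 2 powr (1 / m) * (\<integral>x\<in>cube a l. \<omega> x powr q \<partial>lebesgue) powr (1 / q)"
proof -
  obtain y where y: "y \<in> cube a l" "\<forall>x\<in>cube a l. p x \<le> p y" and q: "q = p y"
    using ess_sup_on_cube_attained[OF loc_log_Hoelder_continuous[OF Hoelder CH_pos] l(1)]
    unfolding q_def by blast
  have "(l ^ DIM('a)) powr ((p x - p y) / p y) \<le> exp (real DIM('a) * D / m)" if "x \<in> cube a l" for x
    using l m_pos p_ge[of y] y that osc[OF that y(1)] by (intro cube_volume_powr_le_exp) auto
  then show "(\<integral>x\<in>cube a l. \<omega> x powr q \<partial>lebesgue) powr (1 / q)
      \<le> 2 powr (1 / m) * (CR * (exp (real DIM('a) * D / m) + 1)) powr s
        * var_norm p (\<lambda>x. indicator (cube a l) x * \<omega> x)"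
    unfolding q by (intro cube_norm_le_var_norm[OF l(1) p_ge p_le]) auto
  show "var_norm p (\<lambda>x. indicator (cube a l) x * \<omega> x)
      \<le> 2 powr (1 / m) * (\<integral>x\<in>cube a l. \<omega> x powr q \<partial>lebesgue) powr (1 / q)"
  proof -
    have "0 < (\<integral>x\<in>cube a l. \<omega> x powr p y \<partial>lebesgue)"
      using m_pos p_ge[of y] p_le[of y] by (intro set_integral_powr_cube_pos[OF l(1)]) auto
    then show ?thesis
      unfolding q using y by (intro var_norm_le_of_modular_le_1 var_modular_small_cube[OF l]) auto
  qed
qed

lemma var_norm_cube_equiv:
  "\<exists>c>0. \<exists>C>0. \<forall>a l. 0 < l \<longrightarrow>
    (let Q = cube a l;
         N = var_norm p (\<lambda>x. indicator Q x * \<omega> x);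
         R = (if l > 1
              then (\<integral>x\<in>Q. \<omega> x powr P \<partial>lebesgue) powr (1 / P)
              else (\<integral>x\<in>Q. \<omega> x powr ess_sup_on Q p \<partial>lebesgue) powr (1 / ess_sup_on Q p))
     in c * R \<le> N \<and> N \<le> C * R)"
proof -
  obtain C0 where C0: "0 < C0" "\<forall>a l. 0 < l \<longrightarrow> var_norm p (\<lambda>x. indicator (cube a l) x * \<omega> x)
      \<le> C0 * (\<integral>x\<in>cube a l. \<omega> x powr P \<partial>lebesgue) powr (1 / P)"
    using var_norm_cube_le by blast
  obtain D where D: "0 \<le> D" "\<And>a l x y. 0 < l \<Longrightarrow> l \<le> 1 \<Longrightarrow> x \<in> cube a l \<Longrightarrow> y \<in> cube a l \<Longrightarrow>
      (p y - p x) * ln (1 / l) \<le> D"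
    using loc_log_Hoelder_cube_oscillation[OF Hoelder less_imp_le[OF CH_pos] p_ge p_le] by blast
  define K where "K = 2 powr (1 / m) * (CR * (exp (real DIM('a) * D / m) + 1)) powr s"
  define C where "C = max C0 (2 powr (1 / m))"
  define R where "R a l = (if 1 < l then (\<integral>x\<in>cube a l. \<omega> x powr P \<partial>lebesgue) powr (1 / P)
    else (\<integral>x\<in>cube a l. \<omega> x powr ess_sup_on (cube a l) p \<partial>lebesgue) powr (1 / ess_sup_on (cube a l) p))"
    for a l
  define N where "N a l = var_norm p (\<lambda>x. indicator (cube a l) x * \<omega> x)" for a l
  have "0 < exp (real DIM('a) * D / m) + 1" by (smt (verit) exp_gt_zero)
  then have K: "0 < K" unfolding K_def using CR_pos by simp
  have "R a l \<le> K * N a l \<and> N a l \<le> C * R a l" if l: "0 < l" for a l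
  proof (cases "1 < l")
    case True
    have "N a l \<le> C0 * R a l" using True C0(2) l unfolding R_def N_def by simp
    also have "\<dots> \<le> C * R a l" unfolding C_def R_def by (intro mult_right_mono) auto
    finally show ?thesis
      using True D(1) m_pos var_norm_large_cube[OF True] unfolding R_def N_def K_def by simp
  next
    case False
    then show ?thesis
      using var_norm_small_cube[OF l _ D(2)[OF l], of a] unfolding R_def N_def K_def C_def
      by (auto intro: order_trans[OF _ mult_right_mono[OF max.cobounded2]])
  qed
  then have "1 / K * R a l \<le> N a l \<and> N a l \<le> C * R a l" if "0 < l" for a l
    using K that by (simp add: field_simps)
  moreover have "0 < C" unfolding C_def using C0 by simp
  ultimately show ?thesis
    using K unfolding R_def N_def Let_def by (intro exI[of _ "1 / K"] conjI exI[of _ C] allI impI) auto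
qed

end

theorem corollary3p9:
  fixes p \<omega> :: "real^'n \<Rightarrow> real" and s :: real
  assumes "P_log p (ess_sup_on UNIV p)"
    and "s > 1 / ess_inf_on UNIV p"
    and "weight \<omega>"
    and "RH (s * ess_sup_on UNIV p) (\<lambda>x. \<omega> x powr (1/s))"
  shows "\<exists>c>0. \<exists>C>0. \<forall>(a::real^'n) l. 0 < l \<longrightarrow>
    (let Q = cube a l;
         N = weighted_var_norm p \<omega> (indicator Q);
         R = (if l > 1
              then (\<integral>x\<in>Q. \<omega> x powr ess_sup_on UNIV p \<partial>lebesgue) powr (1 / ess_sup_on UNIV p)
              else (\<integral>x\<in>Q. \<omega> x powr ess_sup_on Q p \<partial>lebesgue) powr (1 / ess_sup_on Q p))
     in c * R \<le> N \<and> N \<le> C * R)"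
proof -
  define P m where "P = ess_sup_on UNIV p" and "m = ess_inf_on UNIV p"
  obtain CH CD where p_measurable: "p \<in> borel_measurable lebesgue" and m_pos: "0 < m"
    and Hoelder: "loc_log_Hoelder CH p" "0 < CH" and decay: "log_decay CD P p" "0 < CD"
    using assms(1) unfolding P_log_iff P_def[symmetric] m_def[symmetric] by blast
  have p_bounds: "m \<le> p x" "p x \<le> P" for x
    using P_log_pointwise[OF assms(1)] unfolding P_def m_def by auto
  have s_pos: "0 < s" using assms(2) m_pos unfolding m_def[symmetric] by (smt (verit) divide_pos_pos)
  then have s_gt: "1 / s < m" using assms(2) m_pos unfolding m_def[symmetric] by (simp add: field_simps)
  obtain CR where RH: "0 < CR" "\<forall>a l. 0 < l \<longrightarrow> set_integrable lebesgue (cube a l) (\<lambda>x. \<omega> x powr P) \<and>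
    (1 / measure lebesgue (cube a l) * (\<integral>x\<in>cube a l. \<omega> x powr P \<partial>lebesgue)) powr (1 / (s * P))
      \<le> CR * (1 / measure lebesgue (cube a l) * (\<integral>x\<in>cube a l. \<omega> x powr (1 / s) \<partial>lebesgue))"
    using RH_powrD[OF assms(4)[folded P_def] s_pos] by blast
  have "0 < P" using m_pos p_bounds[of 0] by linarith
  then interpret Plog_RH_weight \<omega> P p m s CH CD CR
    using p_measurable m_pos p_bounds s_pos s_gt Hoelder decay RH weight_measurable_cube[OF assms(3)] assms(3)
    by unfold_locales (auto simp: weight_def)
  show ?thesis using var_norm_cube_equiv unfolding weighted_var_norm_def P_def by simp
qed

end
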